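(* Let $(S,M)$ be a Coxeter matrix and let $e=\{s_+,s_-\}\subseteq S$ with $m_{s_+,s_-}=3$. Let $(S/e,N)$ be the edge contraction of $(S,M)$ along $e$. Then the assignment \[ s\mapsto s \quad (s\in S\setminus\{s_+,s_-\}),\qquad s_0\mapsto s_+s_-s_+ \] extends to a well-defined group homomorphism $\phi: W_{S/e,N}\to W_{S,M}$, and $\phi$ is injective.
   Context: A Coxeter matrix on a nonempty set $S$ is a symmetric matrix $M=(m_{s,s'})_{s,s'\in S}$ with entries in $\mathbb Z_{\ge 1}\sqcup\{\infty\}$ such that $m_{s,s'}=1$ iff $s=s'$. The Coxeter group $W_{S,M}$ is the group generated by the elements of $S$ subject to the relations $(ss')^{m_{s,s'}}=1$ for all $s,s'$ with $m_{s,s'}\neq\infty$. Edge contraction: let $e=\{s_+,s_-\}\subseteq S$ with $s_+\ne s_-$ and $m_{s_+,s_-}=3$. Let $s_0$ be a new symbol and $S/e=(S\setminus\{s_+,s_-\})\sqcup\{s_0\}$. Define the symmetric matrix $N=(n_{s,s'})_{s,s'\in S/e}$ by $n_{s,s}=1$ for all $s$; $n_{s,s'}=m_{s,s'}$ for distinct $s,s'\in S\setminus\{s_+,s_-\}$; and for $s\in S\setminus\{s_+,s_-\}$: $n_{s,s_0}=n_{s_0,s}=m_{s,s_+}+m_{s,s_-}-2$ if $m_{s,s_+}=2$ or $m_{s,s_-}=2$ (with the convention $\infty+k=\infty$), and $n_{s,s_0}=n_{s_0,s}=\infty$ if both $m_{s,s_+}>2$ and $m_{s,s_-}>2$. Then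 $N$ is a Coxeter matrix, and $(S/e,N)$ is called the edge contraction of $(S,M)$ along $e$. *)

theory Defs
  imports "HOL-Algebra.Group" "HOL-Library.Extended_Nat"
begin

definition coxeter_matrix :: "'a set \<Rightarrow> ('a \<Rightarrow> 'a \<Rightarrow> enat) \<Rightarrow> bool" where
  "coxeter_matrix S M \<longleftrightarrow> S \<noteq> {} \<and>
     (\<forall>s\<in>S. \<forall>t\<in>S. M s t = M t s \<and> M s t \<ge> 1 \<and> (M s t = 1 \<longleftrightarrow> s = t))"

inductive cox_eq :: "'a set \<Rightarrow> ('a \<Rightarrow> 'a \<Rightarrow> enat) \<Rightarrow> 'a list \<Rightarrow> 'a list \<Rightarrow> bool"
  for S M where
  refl: "set w \<subseteq> S \<Longrightarrow> cox_eq S M w w"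
| rel: "set u \<subseteq> S \<Longrightarrow> set v \<subseteq> S \<Longrightarrow> s \<in> S \<Longrightarrow> t \<in> S \<Longrightarrow> M s t = enat m \<Longrightarrow>
        cox_eq S M (u @ concat (replicate m [s, t]) @ v) (u @ v)"
| sym: "cox_eq S M w w' \<Longrightarrow> cox_eq S M w' w"
| trans: "cox_eq S M w w' \<Longrightarrow> cox_eq S M w' w'' \<Longrightarrow> cox_eq S M w w''"

definition cox_class :: "'a set \<Rightarrow> ('a \<Rightarrow> 'a \<Rightarrow> enat) \<Rightarrow> 'a list \<Rightarrow> 'a list set" where
  "cox_class S M w = {w'. cox_eq S M w w'}"

definition coxeter_group :: "'a set \<Rightarrow> ('a \<Rightarrow> 'a \<Rightarrow> enat) \<Rightarrow> 'a list set monoid" where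
  "coxeter_group S M =
     \<lparr> carrier = {cox_class S M w | w. set w \<subseteq> S},
       mult = (\<lambda>A B. {w. \<exists>a\<in>A. \<exists>b\<in>B. cox_eq S M (a @ b) w}),
       one = cox_class S M [] \<rparr>"

text \<open>Edge contraction along e = {sp, sm}: the new vertex set is
  Some ` (S - {sp, sm}) together with the new symbol s0 = None.\<close>
definition contract_set :: "'a set \<Rightarrow> 'a \<Rightarrow> 'a \<Rightarrow> 'a option set" where
  "contract_set S sp sm = Some ` (S - {sp, sm}) \<union> {None}"

definition contract_matrix :: "('a \<Rightarrow> 'a \<Rightarrow> enat) \<Rightarrow> 'a \<Rightarrow> 'a \<Rightarrow> 'a option \<Rightarrow> 'a option \<Rightarrow> enat" where
  "contract_matrix M sp sm x y =
     (case (x, y) of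
        (Some s, Some t) \<Rightarrow> M s t
      | (None, None) \<Rightarrow> 1
      | (Some s, None) \<Rightarrow> (if M s sp = 2 \<or> M s sm = 2 then M s sp + M s sm - 2 else \<infinity>)
      | (None, Some s) \<Rightarrow> (if M s sp = 2 \<or> M s sm = 2 then M s sp + M s sm - 2 else \<infinity>))"

end

theory Submission
  imports Defs
begin

text \<open>
  Well-definedness of \<phi> amounts to checking the Coxeter relations of N in W_{S,M}. For
  s \<notin> e with m_{s,s_+} = 2 the element s s_+s_-s_+ is conjugate by s_+ to s s_-, so it has
  order m_{s,s_-} = n_{s,s_0}; the case m_{s,s_-} = 2 reduces to this one by the braid relation
  s_+s_-s_+ = s_-s_+s_-.

  Injectivity comes from Tits' geometric representation. W_{S,M} acts on functions
  f : S \<rightarrow> \<real> through the cosine form B, and f \<mapsto> (f|_{S - e}, f(s_+) + f(s_-)) intertwines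
  this action, pulled back along \<phi>, with the geometric action of W_{S/e,N} for the form
  B'(s, s_0) = B(s, s_+) + B(s, s_-). This form is admissible: it is -cos(\<pi>/n_{s,s_0}) when
  one of the two summands vanishes and \<le> -1 otherwise. Tits' positivity argument shows that
  such a representation is faithful, so \<phi> is injective.
\<close>

subsection \<open>Words modulo the Coxeter relations\<close>

lemmas [trans] = cox_eq.trans

lemma cox_eq_set: "cox_eq S M w w' \<Longrightarrow> set w \<subseteq> S \<and> set w' \<subseteq> S"
  by (induction rule: cox_eq.induct) auto

lemma cox_eq_cong:
  "cox_eq S M w w' \<Longrightarrow> set u \<subseteq> S \<Longrightarrow> set v \<subseteq> S \<Longrightarrow> cox_eq S M (u @ w @ v) (u @ w' @ v)"
proof (induction arbitrary: u v rule: cox_eq.induct)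
  case (refl w)
  then show ?case by (intro cox_eq.refl) auto
next
  case (rel u0 v0 s t m)
  have "cox_eq S M ((u @ u0) @ concat (replicate m [s, t]) @ (v0 @ v)) ((u @ u0) @ (v0 @ v))"
    by (rule cox_eq.rel) (use rel in auto)
  then show ?case by simp
next
  case (sym w w')
  then show ?case by (blast intro: cox_eq.sym)
next
  case (trans w w' w'')
  then show ?case by (blast intro: cox_eq.trans)
qed

lemma cox_eq_append_left: "cox_eq S M w w' \<Longrightarrow> set u \<subseteq> S \<Longrightarrow> cox_eq S M (u @ w) (u @ w')"
  using cox_eq_cong[of S M w w' u "[]"] by simp

lemma cox_eq_append_right: "cox_eq S M w w' \<Longrightarrow> set v \<subseteq> S \<Longrightarrow> cox_eq S M (w @ v) (w' @ v)"
  using cox_eq_cong[of S M w w' "[]" v] by simp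

lemma cox_eq_append: "cox_eq S M w w' \<Longrightarrow> cox_eq S M v v' \<Longrightarrow> cox_eq S M (w @ v) (w' @ v')"
  by (meson cox_eq.trans cox_eq_append_left cox_eq_append_right cox_eq_set)

lemma cox_eq_concat_replicate:
  "cox_eq S M x y \<Longrightarrow> cox_eq S M (concat (replicate n x)) (concat (replicate n y))"
  by (induction n) (auto intro: cox_eq.refl cox_eq_append)

lemma cox_eq_length_parity: "cox_eq S M w w' \<Longrightarrow> even (length w + length w')"
  by (induction rule: cox_eq.induct) (auto simp: length_concat sum_list_replicate)

lemma cox_class_eq_iff:
  assumes "set w \<subseteq> S" "set w' \<subseteq> S"
  shows "cox_class S M w = cox_class S M w' \<longleftrightarrow> cox_eq S M w w'"
proof
  assume "cox_class S M w = cox_class S M w'"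
  moreover have "w' \<in> cox_class S M w'" using assms by (simp add: cox_class_def cox_eq.refl)
  ultimately have "w' \<in> cox_class S M w" by simp
  then show "cox_eq S M w w'" by (simp add: cox_class_def)
next
  assume "cox_eq S M w w'"
  then show "cox_class S M w = cox_class S M w'"
    unfolding cox_class_def by (blast intro: cox_eq.trans cox_eq.sym)
qed

lemma carrier_coxeter_group: "carrier (coxeter_group S M) = {cox_class S M w | w. set w \<subseteq> S}"
  by (simp add: coxeter_group_def)

lemma cox_class_mult:
  assumes "set a \<subseteq> S" "set b \<subseteq> S"
  shows "cox_class S M a \<otimes>\<^bsub>coxeter_group S M\<^esub> cox_class S M b = cox_class S M (a @ b)"
proof -
  have "{w. \<exists>a'\<in>cox_class S M a. \<exists>b'\<in>cox_class S M b. cox_eq S M (a' @ b') w} = cox_class S M (a @ b)"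
  proof (intro equalityI subsetI)
    fix w assume "w \<in> {w. \<exists>a'\<in>cox_class S M a. \<exists>b'\<in>cox_class S M b. cox_eq S M (a' @ b') w}"
    then obtain a' b' where "cox_eq S M a a'" "cox_eq S M b b'" "cox_eq S M (a' @ b') w"
      by (auto simp: cox_class_def)
    then show "w \<in> cox_class S M (a @ b)"
      by (simp add: cox_class_def) (meson cox_eq.trans cox_eq_append)
  next
    fix w assume "w \<in> cox_class S M (a @ b)"
    moreover have "a \<in> cox_class S M a" "b \<in> cox_class S M b"
      using assms by (auto simp: cox_class_def intro: cox_eq.refl)
    ultimately show "w \<in> {w. \<exists>a'\<in>cox_class S M a. \<exists>b'\<in>cox_class S M b. cox_eq S M (a' @ b') w}"
      by (auto simp: cox_class_def)
  qed
  then show ?thesis by (simp add: coxeter_group_def)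
qed

lemma concat_replicate_append_commute: "concat (replicate n z) @ z = z @ concat (replicate n z)"
  by (induction n) auto

lemma rev_concat_replicate: "rev (concat (replicate n z)) = concat (replicate n (rev z))"
  by (induction n) (auto simp: concat_replicate_append_commute)

subsection \<open>Alternating words and Chebyshev polynomials\<close>

text \<open>\<open>alt_word x y n\<close> is the alternating word \<open>\<dots> y x y x\<close> of length n; it ends with x.\<close>

fun alt_word :: "'b \<Rightarrow> 'b \<Rightarrow> nat \<Rightarrow> 'b list" where
  "alt_word x y 0 = []"
| "alt_word x y (Suc n) = (if even n then x else y) # alt_word x y n"

lemma alt_word_Suc_snoc: "alt_word x y (Suc n) = alt_word y x n @ [x]"
  by (induction n) auto

lemma set_alt_word: "set (alt_word x y n) \<subseteq> {x, y}"
  by (induction n) auto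

lemma length_alt_word [simp]: "length (alt_word x y n) = n"
  by (induction n) auto

lemma alt_word_add:
  "alt_word x y (n + k) = (if even k then alt_word x y n else alt_word y x n) @ alt_word x y k"
  by (induction n) auto

lemma rev_alt_word: "rev (alt_word x y n) = (if even n then alt_word y x n else alt_word x y n)"
proof (induction n arbitrary: x y)
  case 0
  then show ?case by simp
next
  case (Suc n)
  have "rev (alt_word x y (Suc n)) = x # rev (alt_word y x n)"
    by (subst alt_word_Suc_snoc) simp
  then show ?case using Suc[of y x] by (cases "even n") simp_all
qed

lemma alt_word_double: "alt_word x y (2 * m) = concat (replicate m [y, x])"
  by (induction m) auto

lemma no_adjacent_repeat_eq_alt_word:
  assumes "s \<noteq> t" "set u \<subseteq> {s, t}" "\<forall>p x q. u \<noteq> p @ [x, x] @ q" "u \<noteq> [] \<longrightarrow> last u = t"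
  shows "u = alt_word t s (length u)"
  using assms(2-4)
proof (induction u)
  case Nil
  then show ?case by simp
next
  case (Cons x u')
  show ?case
  proof (cases "u' = []")
    case True
    then show ?thesis using Cons.prems(3) by simp
  next
    case False
    have "\<forall>p y q. u' \<noteq> p @ [y, y] @ q"
    proof (intro allI notI)
      fix p y q assume "u' = p @ [y, y] @ q"
      then have "x # u' = (x # p) @ [y, y] @ q" by simp
      then show False using Cons.prems(2) by blast
    qed
    then have u': "u' = alt_word t s (length u')" using Cons False by simp
    obtain k where k: "length u' = Suc k" using False by (cases u') auto
    have "hd u' = (if even k then t else s)" using u' k by (metis alt_word.simps(2) list.sel(1))
    moreover have "x \<noteq> hd u'"
    proof
      assume "x = hd u'"
      then have "x # u' = [] @ [x, x] @ tl u'" using False by simp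
      then show False using Cons.prems(2) by blast
    qed
    ultimately have "x = (if even k then s else t)" using Cons.prems(1) assms(1) by auto
    then show ?thesis using u' k by simp
  qed
qed

text \<open>\<open>cheb_U c n\<close> is the Chebyshev polynomial of the second kind U_{n-1} evaluated at c.\<close>

fun cheb_U :: "real \<Rightarrow> nat \<Rightarrow> real" where
  "cheb_U c 0 = 0"
| "cheb_U c (Suc 0) = 1"
| "cheb_U c (Suc (Suc n)) = 2 * c * cheb_U c (Suc n) - cheb_U c n"

lemma cheb_U_cos:
  assumes "sin \<theta> \<noteq> 0"
  shows "cheb_U (cos \<theta>) n = sin (real n * \<theta>) / sin \<theta>"
proof (induction "cos \<theta>" n rule: cheb_U.induct)
  case (3 n)
  have "sin (real (Suc (Suc n)) * \<theta>) = 2 * cos \<theta> * sin (real (Suc n) * \<theta>) - sin (real n * \<theta>)"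
  proof -
    have a: "real (Suc (Suc n)) * \<theta> = real (Suc n) * \<theta> + \<theta>" by (simp add: algebra_simps)
    have b: "real n * \<theta> = real (Suc n) * \<theta> - \<theta>" by (simp add: algebra_simps)
    show ?thesis unfolding a b sin_add sin_diff by (simp add: algebra_simps)
  qed
  then show ?case using 3 assms by (simp add: field_simps)
qed (use assms in simp_all)

lemma cheb_U_growth:
  assumes "1 \<le> c"
  shows "real n \<le> cheb_U c n \<and> cheb_U c n + 1 \<le> cheb_U c (Suc n)"
proof (induction n)
  case 0
  then show ?case by simp
next
  case (Suc n)
  have "0 \<le> cheb_U c (Suc n)" using Suc by linarith
  then have "2 * cheb_U c (Suc n) \<le> 2 * c * cheb_U c (Suc n)"
    using mult_right_mono[OF assms] by simp
  then show ?case using Suc by (simp only: of_nat_Suc cheb_U.simps) linarith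
qed

subsection \<open>The geometric representation\<close>

text \<open>
  B plays the role of the bilinear form of a geometric representation. For m_{s,t} = \<infinity> any
  value \<le> -1 is allowed, not just -1: the contracted form below needs this freedom.
\<close>

locale coxeter_form =
  fixes S :: "'b set" and M :: "'b \<Rightarrow> 'b \<Rightarrow> enat" and B :: "'b \<Rightarrow> 'b \<Rightarrow> real"
  assumes M_diag: "s \<in> S \<Longrightarrow> M s s = 1"
    and M_sym: "s \<in> S \<Longrightarrow> t \<in> S \<Longrightarrow> M s t = M t s"
    and M_ge_2: "s \<in> S \<Longrightarrow> t \<in> S \<Longrightarrow> s \<noteq> t \<Longrightarrow> M s t = enat m \<Longrightarrow> 2 \<le> m"
    and B_diag: "B s s = 1"
    and B_sym: "s \<in> S \<Longrightarrow> t \<in> S \<Longrightarrow> B s t = B t s"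
    and B_finite: "s \<in> S \<Longrightarrow> t \<in> S \<Longrightarrow> s \<noteq> t \<Longrightarrow> M s t = enat m \<Longrightarrow> B s t = - cos (pi / real m)"
    and B_infinite: "s \<in> S \<Longrightarrow> t \<in> S \<Longrightarrow> s \<noteq> t \<Longrightarrow> M s t = \<infinity> \<Longrightarrow> B s t \<le> -1"
begin

abbreviation ceq where "ceq \<equiv> cox_eq S M"

lemma cancel_pair: "s \<in> S \<Longrightarrow> set u \<subseteq> S \<Longrightarrow> set v \<subseteq> S \<Longrightarrow> ceq (u @ [s, s] @ v) (u @ v)"
  using cox_eq.rel[of u S v s s M 1] M_diag by (simp add: one_enat_def)

lemma rev_append_cancel: "set w \<subseteq> S \<Longrightarrow> ceq (rev w @ w) []"
proof (induction w)
  case Nil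
  then show ?case by (auto intro: cox_eq.refl)
next
  case (Cons x w)
  have "ceq (rev w @ [x, x] @ w) (rev w @ w)"
    using Cons by (intro cancel_pair) auto
  then show ?case using Cons by (auto intro: cox_eq.trans)
qed

lemma append_rev_cancel: "set w \<subseteq> S \<Longrightarrow> ceq (w @ rev w) []"
  using rev_append_cancel[of "rev w"] by simp

lemma inverse_unique:
  assumes "ceq (a @ y) []"
  shows "ceq y (rev a)"
proof -
  have S: "set a \<subseteq> S" "set y \<subseteq> S" using cox_eq_set[OF assms] by auto
  have "ceq y ((rev a @ a) @ y)"
    using cox_eq_append_right[OF rev_append_cancel] S by (auto intro: cox_eq.sym)
  also have "(rev a @ a) @ y = rev a @ (a @ y)" by simp
  also have "ceq (rev a @ (a @ y)) (rev a @ [])"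
    using cox_eq_append_left[OF assms] S by simp
  finally show ?thesis by simp
qed

lemma eq_of_append_rev_cancel:
  assumes "ceq (a @ rev b) []"
  shows "ceq a b"
proof -
  have S: "set a \<subseteq> S" "set b \<subseteq> S" using cox_eq_set[OF assms] by auto
  have "ceq a (a @ rev b @ b)"
    using cox_eq.sym[OF cox_eq_append_left[OF rev_append_cancel[OF S(2)] S(1)]] by simp
  also have "a @ rev b @ b = (a @ rev b) @ b" by simp
  also have "ceq \<dots> ([] @ b)" by (rule cox_eq_append_right[OF assms S(2)])
  finally show ?thesis by simp
qed

lemma rev_cancel:
  assumes "ceq w []"
  shows "ceq (rev w) []"
proof -
  have S: "set w \<subseteq> S" using cox_eq_set[OF assms] by simp
  have "ceq (rev w @ []) (rev w @ w)" using cox_eq_append_left[OF cox_eq.sym[OF assms]] S by simp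
  also have "ceq (rev w @ w) []" using rev_append_cancel S by blast
  finally show ?thesis by simp
qed

lemma braid_relation:
  assumes "s \<in> S" "t \<in> S" "M s t = enat m"
  shows "ceq (alt_word t s m) (alt_word s t m)"
proof -
  have "ceq ([] @ concat (replicate m [s, t]) @ []) ([] @ [])"
    by (rule cox_eq.rel) (use assms in auto)
  then have "ceq ((if even m then alt_word t s m else alt_word s t m) @ alt_word t s m) []"
    using alt_word_double[of t s m] by (simp add: mult_2 alt_word_add)
  then have "ceq (alt_word t s m) (rev (if even m then alt_word t s m else alt_word s t m))"
    by (rule inverse_unique)
  then show ?thesis by (cases "even m") (simp_all add: rev_alt_word)
qed

lemma commute:
  assumes "s \<in> S" "a \<in> S" "M s a = 2"
  shows "ceq [s, a] [a, s]"
  using braid_relation[of s a 2] assms by (simp add: numeral_eq_enat numeral_2_eq_2)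

text \<open>Since a commutes with s, the word s a b a is conjugate by a to s b.\<close>

lemma conjugate_relator:
  assumes s: "s \<in> S" and a: "a \<in> S" and b: "b \<in> S" and sa: "M s a = 2" and sb: "M s b = enat n"
  shows "ceq (concat (replicate n [s, a, b, a])) []"
proof -
  have conj: "ceq (concat (replicate k [s, a, b, a])) ([a] @ concat (replicate k [s, b]) @ [a])" for k
  proof (induction k)
    case 0
    have "ceq ([] @ [a, a] @ []) ([] @ [])" by (rule cancel_pair) (use a in auto)
    then show ?case by (simp add: cox_eq.sym)
  next
    case (Suc k)
    define Y where "Y = concat (replicate k [s, b])"
    have Y: "set Y \<subseteq> S" using s b by (auto simp: Y_def)
    have "ceq (concat (replicate (Suc k) [s, a, b, a])) ([s, a, b, a] @ ([a] @ Y @ [a]))"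
      using cox_eq_append_left[OF Suc[folded Y_def], of "[s, a, b, a]"] s a b by simp
    also have "[s, a, b, a] @ ([a] @ Y @ [a]) = [s, a, b] @ [a, a] @ (Y @ [a])" by simp
    also have "ceq \<dots> ([s, a, b] @ (Y @ [a]))" by (rule cancel_pair) (use s a b Y in auto)
    also have "[s, a, b] @ (Y @ [a]) = [s, a] @ ([b] @ Y @ [a])" by simp
    also have "ceq \<dots> ([a, s] @ ([b] @ Y @ [a]))"
      by (rule cox_eq_append_right[OF commute[OF s a sa]]) (use b Y a in auto)
    also have "[a, s] @ ([b] @ Y @ [a]) = [a] @ concat (replicate (Suc k) [s, b]) @ [a]"
      by (simp add: Y_def)
    finally show ?case .
  qed
  have relator: "ceq ([] @ concat (replicate n [s, b]) @ []) ([] @ [])"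
    by (rule cox_eq.rel) (use s b sb in auto)
  have "ceq ([a] @ concat (replicate n [s, b]) @ [a]) ([a] @ [] @ [a])"
    using cox_eq_cong[OF relator, of "[a]" "[a]"] a by simp
  also have "ceq ([a] @ [] @ [a]) []" using cancel_pair[of a "[]" "[]"] a by simp
  finally show ?thesis using conj[of n] cox_eq.trans by blast
qed

text \<open>
  Let V have basis (\<alpha>_x)_{x \<in> S} and let \<sigma>_s \<alpha> = \<alpha> - 2 B(\<alpha>_s, \<alpha>) \<alpha>_s. A function h on S is a
  linear functional on V, and \<open>reflect s h = h \<circ> \<sigma>_s\<close>; hence \<open>word_act w h x = h (\<sigma>_w \<alpha>_x)\<close>.
\<close>

definition reflect :: "'b \<Rightarrow> ('b \<Rightarrow> real) \<Rightarrow> 'b \<Rightarrow> real" where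
  "reflect s h = (\<lambda>x. h x - 2 * B s x * h s)"

definition word_act :: "'b list \<Rightarrow> ('b \<Rightarrow> real) \<Rightarrow> 'b \<Rightarrow> real" where
  "word_act w = fold reflect w"

lemma word_act_Nil [simp]: "word_act [] h = h"
  by (simp add: word_act_def)

lemma word_act_Cons: "word_act (x # w) h = word_act w (reflect x h)"
  by (simp add: word_act_def)

lemma word_act_append: "word_act (v @ w) h = word_act w (word_act v h)"
  by (simp add: word_act_def)

lemma reflect_reflect: "reflect s (reflect s h) = h"
  by (simp add: reflect_def B_diag)

lemma word_act_snoc_self: "word_act (w @ [s]) h s = - word_act w h s"
  by (simp add: word_act_append word_act_Cons reflect_def B_diag)

lemma word_act_alt_word:
  assumes "B x y = - c" "B y x = - c"
  shows "word_act (alt_word x y k) h y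
    = cheb_U c (Suc k) * h (if even k then y else x) + cheb_U c k * h (if even k then x else y)"
proof (induction k arbitrary: h)
  case 0
  then show ?case by simp
next
  case (Suc k)
  show ?case
  proof (cases "even k")
    case True
    have "word_act (alt_word x y (Suc k)) h y = word_act (alt_word x y k) (reflect x h) y"
      using True by (simp add: word_act_Cons)
    also have "\<dots> = cheb_U c (Suc k) * reflect x h y + cheb_U c k * reflect x h x"
      using Suc[of "reflect x h"] True by simp
    also have "\<dots> = cheb_U c (Suc (Suc k)) * h x + cheb_U c (Suc k) * h y"
      using assms by (simp add: reflect_def B_diag algebra_simps)
    finally show ?thesis using True by simp
  next
    case False
    have "word_act (alt_word x y (Suc k)) h y = word_act (alt_word x y k) (reflect y h) y"
      using False by (simp add: word_act_Cons)
    also have "\<dots> = cheb_U c (Suc k) * reflect y h x + cheb_U c k * reflect y h y"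
      using Suc[of "reflect y h"] False by simp
    also have "\<dots> = cheb_U c (Suc (Suc k)) * h y + cheb_U c (Suc k) * h x"
      using assms by (simp add: reflect_def B_diag algebra_simps)
    finally show ?thesis using False by simp
  qed
qed

lemma word_act_pair_invariant:
  assumes "set w \<subseteq> {s, t}" "B s z = l * B s s + \<mu> * B s t" "B t z = l * B t s + \<mu> * B t t"
  shows "word_act w h z - l * word_act w h s - \<mu> * word_act w h t = h z - l * h s - \<mu> * h t"
  using assms(1)
proof (induction w arbitrary: h)
  case Nil
  then show ?case by simp
next
  case (Cons y w)
  have y: "y = s \<or> y = t" using Cons by auto
  have "word_act (y # w) h z - l * word_act (y # w) h s - \<mu> * word_act (y # w) h t
      = reflect y h z - l * reflect y h s - \<mu> * reflect y h t"
    using Cons by (simp add: word_act_Cons)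
  also have "\<dots> = h z - l * h s - \<mu> * h t - 2 * h y * (B y z - l * B y s - \<mu> * B y t)"
    by (simp add: reflect_def algebra_simps)
  also have "\<dots> = h z - l * h s - \<mu> * h t" using y assms(2,3) by auto
  finally show ?case .
qed

text \<open>Here cheb_U c j = sin(j\<pi>/m) / sin(\<pi>/m), which is 0, 1 and -1 for j = 2m, 2m + 1 and 2m - 1.\<close>

lemma word_act_relator_fixes_pair:
  assumes "s \<in> S" "t \<in> S" "s \<noteq> t" "M s t = enat m"
  shows "word_act (alt_word t s (2 * m)) h s = h s \<and> word_act (alt_word t s (2 * m)) h t = h t"
proof -
  have m: "2 \<le> m" using M_ge_2 assms by blast
  define \<theta> where "\<theta> = pi / real m"
  have sin: "sin \<theta> > 0" using m by (intro sin_gt_zero) (auto simp: \<theta>_def field_simps)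
  have "B s t = - cos \<theta>" using B_finite[OF assms] by (simp add: \<theta>_def)
  moreover have "B t s = - cos \<theta>" using calculation B_sym assms by simp
  ultimately have Bst: "B s t = - cos \<theta>" "B t s = - cos \<theta>" .
  have m\<theta>: "real m * \<theta> = pi" using m by (simp add: \<theta>_def)
  have U0: "cheb_U (cos \<theta>) (2 * m) = 0"
    using cheb_U_cos[of \<theta> "2 * m"] sin m\<theta> by (simp add: mult.assoc)
  have U1: "cheb_U (cos \<theta>) (Suc (2 * m)) = 1"
  proof -
    have "real (Suc (2 * m)) * \<theta> = \<theta> + 2 * pi" using m\<theta> by (simp add: algebra_simps)
    then show ?thesis using cheb_U_cos[of \<theta> "Suc (2 * m)"] sin by (simp add: sin_periodic)
  qed
  have U_1: "cheb_U (cos \<theta>) (2 * m - 1) = -1"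
  proof -
    have "real (2 * m - 1) * \<theta> = - \<theta> + 2 * pi" using m\<theta> m by (simp add: of_nat_diff algebra_simps)
    then show ?thesis using cheb_U_cos[of \<theta> "2 * m - 1"] sin by (simp add: sin_periodic)
  qed
  have "word_act (alt_word t s (2 * m)) h t = - word_act (alt_word s t (2 * m - 1)) h t"
    using alt_word_Suc_snoc[of t s "2 * m - 1"] m word_act_snoc_self by (simp add: Suc_diff_1)
  also have "\<dots> = h t"
    using word_act_alt_word[OF Bst, of "2 * m - 1" h] U_1 U0 m by (simp add: Suc_diff_1)
  finally show ?thesis
    using word_act_alt_word[OF Bst(2,1), of "2 * m" h] U0 U1 by simp
qed

lemma word_act_relator:
  assumes "s \<in> S" "t \<in> S" "M s t = enat m"
  shows "word_act (concat (replicate m [s, t])) h = h"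
proof (cases "s = t")
  case True
  then have "m = 1" using assms M_diag by (simp add: one_enat_def)
  then show ?thesis using True by (simp add: word_act_Cons reflect_reflect)
next
  case False
  have m: "2 \<le> m" using M_ge_2 assms False by blast
  define c where "c = cos (pi / real m)"
  have angle: "0 < pi / real m" "pi / real m \<le> pi / 2" using m by (auto simp: field_simps)
  then have "0 \<le> c" unfolding c_def by (intro cos_ge_zero) auto
  moreover have "c < 1"
    unfolding c_def using cos_monotone_0_pi[of 0 "pi / real m"] angle by simp
  ultimately have "c * c < 1 * 1" by (intro mult_strict_mono) auto
  then have d: "1 - c * c \<noteq> 0" by simp
  have Bst: "B s t = - c" "B t s = - c"
    using B_finite[OF assms(1,2) False assms(3)] B_sym assms by (simp_all add: c_def)
  define w where "w = alt_word t s (2 * m)"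
  have w: "concat (replicate m [s, t]) = w" by (simp add: w_def alt_word_double)
  have "word_act w h z = h z" for z
  proof -
    \<comment> \<open>B is nondegenerate on span(\<alpha>_s, \<alpha>_t) as c < 1, so there B(\<alpha>_z, -) = B(l \<alpha>_s + \<mu> \<alpha>_t, -).\<close>
    define l where "l = (B s z + c * B t z) / (1 - c * c)"
    define \<mu> where "\<mu> = (B t z + c * B s z) / (1 - c * c)"
    have "l - \<mu> * c = B s z" "\<mu> - l * c = B t z"
      using d by (simp_all add: l_def \<mu>_def divide_simps) (simp_all add: algebra_simps)
    then have "B s z = l * B s s + \<mu> * B s t" "B t z = l * B t s + \<mu> * B t t"
      by (simp_all add: Bst B_diag)
    from word_act_pair_invariant[OF _ this, of w h] show ?thesis
      using word_act_relator_fixes_pair[OF assms(1,2) False assms(3)] set_alt_word[of t s]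
      by (simp add: w_def insert_commute)
  qed
  then show ?thesis using w by auto
qed

lemma word_act_cox_eq: "ceq w w' \<Longrightarrow> word_act w h = word_act w' h"
proof (induction arbitrary: h rule: cox_eq.induct)
  case (rel u v s t m)
  then show ?case using word_act_relator[of s t m] by (simp add: word_act_append)
qed auto

definition ell :: "'b list \<Rightarrow> nat" where
  "ell w = (LEAST n. \<exists>w'. ceq w w' \<and> length w' = n)"

lemma ell_attained: "set w \<subseteq> S \<Longrightarrow> \<exists>w'. ceq w w' \<and> length w' = ell w"
  unfolding ell_def by (rule LeastI_ex) (auto intro: cox_eq.refl)

lemma ell_le: "ceq w w' \<Longrightarrow> ell w \<le> length w'"
  unfolding ell_def by (rule Least_le) auto

lemma ell_le_length: "set w \<subseteq> S \<Longrightarrow> ell w \<le> length w"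
  by (rule ell_le) (rule cox_eq.refl)

lemma ell_cong:
  assumes "ceq w w'"
  shows "ell w = ell w'"
proof -
  have S: "set w \<subseteq> S" "set w' \<subseteq> S" using cox_eq_set[OF assms] by auto
  obtain a where a: "ceq w a" "length a = ell w" using ell_attained[OF S(1)] by blast
  obtain b where b: "ceq w' b" "length b = ell w'" using ell_attained[OF S(2)] by blast
  have "ell w \<le> ell w'" using ell_le[of w b] cox_eq.trans[OF assms b(1)] b(2) by simp
  moreover have "ell w' \<le> ell w" using ell_le[of w' a] cox_eq.trans[OF cox_eq.sym[OF assms] a(1)] a(2)
    by simp
  ultimately show ?thesis by simp
qed

lemma ell_parity: "set w \<subseteq> S \<Longrightarrow> even (ell w + length w)"
  using ell_attained cox_eq_length_parity by (metis add.commute)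

lemma ell_append_le:
  assumes "set v \<subseteq> S" "set u \<subseteq> S"
  shows "ell (v @ u) \<le> ell v + length u"
proof -
  obtain a where a: "ceq v a" "length a = ell v" using ell_attained[OF assms(1)] by blast
  have "ell (v @ u) \<le> length (a @ u)" using ell_le[OF cox_eq_append_right[OF a(1) assms(2)]] .
  then show ?thesis using a(2) by simp
qed

lemma ell_snoc:
  assumes "set w \<subseteq> S" "s \<in> S"
  shows "ell (w @ [s]) = Suc (ell w) \<or> Suc (ell (w @ [s])) = ell w"
proof -
  have up: "ell (w @ [s]) \<le> ell w + 1" using ell_append_le[of w "[s]"] assms by simp
  have "ceq (w @ [s, s] @ []) (w @ [])" using cancel_pair[of s w "[]"] assms by simp
  then have "ell w = ell ((w @ [s]) @ [s])" using ell_cong by simp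
  also have "\<dots> \<le> ell (w @ [s]) + 1" using ell_append_le[of "w @ [s]" "[s]"] assms by simp
  finally have down: "ell w \<le> ell (w @ [s]) + 1" .
  have "even (ell (w @ [s]) + length w + 1)" using ell_parity[of "w @ [s]"] assms by simp
  moreover have "even (ell w + length w)" using ell_parity[OF assms(1)] .
  moreover have "\<And>a b c :: nat. a \<le> b + 1 \<Longrightarrow> b \<le> a + 1 \<Longrightarrow> even (a + c + 1) \<Longrightarrow> even (b + c)
    \<Longrightarrow> a = Suc b \<or> Suc a = b"
    by presburger
  ultimately show ?thesis using up down by blast
qed

lemma ell_right_factor:
  assumes "set v \<subseteq> S" "ceq w (v @ u)" "ell w = ell v + length u"
  shows "ell u = length u"
proof -
  have u: "set u \<subseteq> S" using cox_eq_set[OF assms(2)] by simp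
  obtain u' where u': "ceq u u'" "length u' = ell u" using ell_attained[OF u] by blast
  have "ell w = ell (v @ u')"
    using ell_cong assms(2) cox_eq.trans cox_eq_append_left[OF u'(1) assms(1)] by metis
  also have "\<dots> \<le> ell v + length u'" using ell_append_le assms(1) cox_eq_set[OF u'(1)] by simp
  finally show ?thesis using assms(3) u'(2) ell_le_length[OF u] by simp
qed

lemma ell_right_factor_ascent:
  assumes v: "set v \<subseteq> S" and wvu: "ceq w (v @ u)" and ell_w: "ell w = ell v + length u"
    and s: "s \<in> S" and ascent: "ell w < ell (w @ [s])"
  shows "length u < ell (u @ [s])"
proof -
  have "set (u @ [s]) \<subseteq> S" using cox_eq_set[OF wvu] s by simp
  then obtain u' where u': "ceq (u @ [s]) u'" "length u' = ell (u @ [s])"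
    using ell_attained by blast
  have "ceq (w @ [s]) (v @ (u @ [s]))" using cox_eq_append_right[OF wvu] s by simp
  also have "ceq \<dots> (v @ u')" by (rule cox_eq_append_left[OF u'(1) v])
  finally have "ell (w @ [s]) \<le> ell v + length u'"
    using ell_cong ell_append_le[OF v] cox_eq_set[OF u'(1)] by (metis le_trans order_refl)
  then show ?thesis using ell_w ascent u'(2) by simp
qed

subsection \<open>Reduced words in dihedral subgroups\<close>

lemma dihedral_reduced_eq_alt_word:
  assumes st: "s \<in> S" "t \<in> S" "s \<noteq> t" and u: "set u \<subseteq> {s, t}"
    and reduced: "ell u = length u" and ascent: "ell u < ell (u @ [s])"
  shows "u = alt_word t s (length u)"
proof (rule no_adjacent_repeat_eq_alt_word[OF st(3) u])
  have uS: "set u \<subseteq> S" using u st by auto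
  show "\<forall>p x q. u \<noteq> p @ [x, x] @ q"
  proof (intro allI notI)
    fix p x q assume u_eq: "u = p @ [x, x] @ q"
    then have "ceq u (p @ q)" using uS cancel_pair by simp
    then have "ell u \<le> length (p @ q)" by (rule ell_le)
    then show False using reduced u_eq by simp
  qed
  show "u \<noteq> [] \<longrightarrow> last u = t"
  proof (rule impI, rule ccontr)
    assume "u \<noteq> []" "last u \<noteq> t"
    then have "last u = s" using u last_in_set by blast
    then obtain v where uv: "u = v @ [s]"
      using append_butlast_last_id[OF \<open>u \<noteq> []\<close>] by metis
    have "ceq (v @ [s, s] @ []) (v @ [])" by (rule cancel_pair) (use st uS uv in auto)
    then have "ell (u @ [s]) \<le> length v" using uv ell_le by simp
    then show False using uv reduced ascent by simp
  qed
qed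

lemma dihedral_ascent_length_bound:
  assumes st: "s \<in> S" "t \<in> S" "s \<noteq> t" "M s t = enat m"
    and u: "u = alt_word t s k" and reduced: "ell u = length u" and ascent: "ell u < ell (u @ [s])"
  shows "k < m"
proof (rule ccontr)
  assume "\<not> k < m"
  then have km: "m \<le> k" by simp
  have m: "2 \<le> m" using M_ge_2 st by blast
  define p where "p = (if even m then alt_word t s (k - m) else alt_word s t (k - m))"
  have p: "set p \<subseteq> S" using set_alt_word[of t s] set_alt_word[of s t] st by (auto simp: p_def)
  have alt: "set (alt_word t s (m - 1)) \<subseteq> S" using set_alt_word[of t s "m - 1"] st by auto
  have "u = p @ alt_word t s m" using u alt_word_add[of t s "k - m" m] km by (simp add: p_def)
  then have "ceq (u @ [s]) (p @ alt_word s t m @ [s])"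
    using cox_eq_cong[OF braid_relation[OF st(1,2,4)] p] st by simp
  also have "p @ alt_word s t m @ [s] = (p @ alt_word t s (m - 1)) @ [s, s] @ []"
    using alt_word_Suc_snoc[of s t "m - 1"] m by (simp add: Suc_diff_1)
  also have "ceq \<dots> ((p @ alt_word t s (m - 1)) @ [])" by (rule cancel_pair) (use st p alt in auto)
  finally have "ceq (u @ [s]) (p @ alt_word t s (m - 1))" by simp
  then have "ell (u @ [s]) \<le> length (p @ alt_word t s (m - 1))" by (rule ell_le)
  moreover have "length p = k - m" by (simp add: p_def)
  ultimately show False using u reduced ascent m km by simp
qed

text \<open>For finite m, cheb_U c j = sin(j\<pi>/m) / sin(\<pi>/m) \<ge> 0 as long as j \<le> m; for m = \<infinity>,
  c \<ge> 1 and cheb_U c grows at least linearly.\<close>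

lemma dihedral_cheb_U_nonneg:
  assumes st: "s \<in> S" "t \<in> S" "s \<noteq> t" and bound: "\<And>m. M s t = enat m \<Longrightarrow> k < m"
  defines "c \<equiv> - B s t"
  shows "0 \<le> cheb_U c k \<and> 0 \<le> cheb_U c (Suc k) \<and> 0 < cheb_U c k + cheb_U c (Suc k)"
proof (cases "M s t")
  case (enat m)
  have km: "k < m" using bound enat by blast
  have m: "2 \<le> m" using M_ge_2 st enat by blast
  define \<theta> where "\<theta> = pi / real m"
  have \<theta>: "0 < \<theta>" using m by (simp add: \<theta>_def)
  have sin: "0 < sin \<theta>" using m by (intro sin_gt_zero) (auto simp: \<theta>_def field_simps)
  have U: "cheb_U c j = sin (real j * \<theta>) / sin \<theta>" for j
    using cheb_U_cos[of \<theta> j] sin B_finite[OF st enat] by (simp add: c_def \<theta>_def)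
  have nonneg: "0 \<le> cheb_U c j" if "j \<le> m" for j
  proof -
    have "real j * \<theta> \<le> pi" using that m by (simp add: \<theta>_def field_simps)
    then show ?thesis using \<theta> sin U by (simp add: sin_ge_zero)
  qed
  have pos: "0 < cheb_U c j" if "0 < j" "j < m" for j
  proof -
    have "real j * \<theta> < pi" using that m by (simp add: \<theta>_def field_simps)
    then show ?thesis using that \<theta> sin U by (simp add: sin_gt_zero)
  qed
  have "0 < cheb_U c k + cheb_U c (Suc k)"
    using pos[of k] nonneg[of "Suc k"] km by (cases "k = 0") simp_all
  then show ?thesis using nonneg[of k] nonneg[of "Suc k"] km by simp
next
  case infinity
  then have "1 \<le> c" using B_infinite[OF st] by (simp add: c_def)
  then show ?thesis using cheb_U_growth[of c k] by auto
qed

lemma dihedral_word_act: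
  assumes st: "s \<in> S" "t \<in> S" "s \<noteq> t" and u: "set u \<subseteq> {s, t}"
    and reduced: "ell u = length u" and ascent: "ell u < ell (u @ [s])"
  obtains a b where "0 \<le> a" "0 \<le> b" "0 < a + b" "\<And>h. word_act u h s = a * h s + b * h t"
proof -
  define k where "k = length u"
  have u_alt: "u = alt_word t s k"
    unfolding k_def by (rule dihedral_reduced_eq_alt_word[OF st u reduced ascent])
  have "k < m" if "M s t = enat m" for m
    using dihedral_ascent_length_bound[OF st that u_alt reduced ascent] .
  note coeff = dihedral_cheb_U_nonneg[OF st this]
  have Bst: "B t s = - (- B s t)" "B s t = - (- B s t)" using B_sym st by simp_all
  note act = word_act_alt_word[OF Bst, of k, folded u_alt]
  show ?thesis
  proof (cases "even k")
    case True
    then show ?thesis using that[of "cheb_U (- B s t) (Suc k)" "cheb_U (- B s t) k"] coeff act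
      by (simp add: add.commute)
  next
    case False
    then show ?thesis using that[of "cheb_U (- B s t) k" "cheb_U (- B s t) (Suc k)"] coeff act
      by simp
  qed
qed

subsection \<open>Tits' positivity lemma and faithfulness\<close>

text \<open>If \<ell>(w t) < \<ell>(w) < \<ell>(w s), write w = v u with u a word in s, t and \<ell>(v) minimal: then
  v has ascents at both s and t, while u is reduced with an ascent at s.\<close>

lemma parabolic_decomposition:
  assumes st: "s \<in> S" "t \<in> S" and w1: "set w1 \<subseteq> S" "ceq w (w1 @ [t])" "ell w = Suc (ell w1)"
  obtains v u where "set v \<subseteq> S" "set u \<subseteq> {s, t}" "ceq w (v @ u)" "ell w = ell v + length u"
    "ell v < ell w" "ell v < ell (v @ [s])" "ell v < ell (v @ [t])"
proof -
  define A where
    "A = {(v, u). set v \<subseteq> S \<and> set u \<subseteq> {s, t} \<and> ceq w (v @ u) \<and> ell w = ell v + length u}"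
  have w1A: "(w1, [t]) \<in> A" unfolding A_def using w1 by auto
  obtain v u where vu: "(v, u) \<in> A" and min: "\<And>v' u'. (v', u') \<in> A \<Longrightarrow> ell v \<le> ell v'"
    using ex_has_least_nat[of "\<lambda>p. p \<in> A" "(w1, [t])" "\<lambda>p. ell (fst p)"] w1A by auto
  have v: "set v \<subseteq> S" and u: "set u \<subseteq> {s, t}" and wvu: "ceq w (v @ u)"
    and ell_w: "ell w = ell v + length u" using vu unfolding A_def by auto
  have ascent: "ell v < ell (v @ [r])" if r: "r \<in> {s, t}" for r
  proof (rule ccontr)
    assume "\<not> ell v < ell (v @ [r])"
    have rS: "r \<in> S" using r st by auto
    then have descent: "Suc (ell (v @ [r])) = ell v"
      using ell_snoc[OF v] \<open>\<not> ell v < ell (v @ [r])\<close> by fastforce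
    have "ceq (v @ [r, r] @ u) (v @ u)" by (rule cancel_pair) (use rS v u st in auto)
    then have "ceq w ((v @ [r]) @ (r # u))" using wvu by (auto intro: cox_eq.trans cox_eq.sym)
    then have "(v @ [r], r # u) \<in> A" using v rS r u ell_w descent unfolding A_def by auto
    then show False using min descent by fastforce
  qed
  have "ell v < ell w" using min[OF w1A] w1 by simp
  with v u wvu ell_w ascent show ?thesis using that by blast
qed

text \<open>Since word_act w f s = f(\<sigma>_w \<alpha>_s) and f > 0 on simple roots, this says that \<sigma>_w \<alpha>_s is a
  positive root whenever \<ell>(w s) > \<ell>(w).\<close>

lemma tits_positivity:
  "set w \<subseteq> S \<Longrightarrow> s \<in> S \<Longrightarrow> ell w < ell (w @ [s]) \<Longrightarrow> (\<forall>x\<in>S. 0 < f x) \<Longrightarrow> 0 < word_act w f s"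
proof (induction "ell w" arbitrary: w s rule: less_induct)
  case less
  note IH = less.hyps
  have w: "set w \<subseteq> S" and s: "s \<in> S" and ascent: "ell w < ell (w @ [s])" and f: "\<forall>x\<in>S. 0 < f x"
    using less.prems by auto
  obtain w0 where w0: "ceq w w0" "length w0 = ell w" using ell_attained[OF w] by blast
  show ?case
  proof (cases w0 rule: rev_cases)
    case Nil
    then show ?thesis using word_act_cox_eq[OF w0(1)] f s by simp
  next
    case (snoc w1 t)
    have w1: "set w1 \<subseteq> S" and t: "t \<in> S" using cox_eq_set[OF w0(1)] snoc by auto
    have ell_w1: "ell w = Suc (ell w1)"
      using ell_cong[OF w0(1)] ell_append_le[OF w1, of "[t]"] ell_le_length[OF w1] w0(2) snoc t
      by simp
    have "ceq (w @ [t]) (w1 @ [t, t] @ [])" using cox_eq_append_right[OF w0(1)] t snoc by simp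
    also have "ceq \<dots> (w1 @ [])" by (rule cancel_pair) (use t w1 in auto)
    finally have "ell (w @ [t]) < ell w" using ell_cong ell_w1 ell_le_length[OF w1] by fastforce
    then have "s \<noteq> t" using ascent by auto
    obtain v u where v: "set v \<subseteq> S" and u: "set u \<subseteq> {s, t}" and wvu: "ceq w (v @ u)"
      and ell_w: "ell w = ell v + length u" and shorter: "ell v < ell w"
      and ascents: "ell v < ell (v @ [s])" "ell v < ell (v @ [t])"
      using parabolic_decomposition[OF s t w1 _ ell_w1] w0(1) snoc by blast
    have "ell u = length u" by (rule ell_right_factor[OF v wvu ell_w])
    moreover have "length u < ell (u @ [s])" by (rule ell_right_factor_ascent[OF v wvu ell_w s ascent])
    ultimately obtain a b where ab: "0 \<le> a" "0 \<le> b" "0 < a + b"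
      and u_act: "\<And>h. word_act u h s = a * h s + b * h t"
      using dihedral_word_act[OF s t \<open>s \<noteq> t\<close> u] by auto
    have "0 < word_act v f s" "0 < word_act v f t"
      using IH[OF shorter v s ascents(1) f] IH[OF shorter v t ascents(2) f] by simp_all
    moreover have "word_act w f s = a * word_act v f s + b * word_act v f t"
      using word_act_cox_eq[OF wvu] u_act by (simp add: word_act_append)
    ultimately show ?thesis using ab by (smt (verit) mult_nonneg_nonneg mult_pos_pos)
  qed
qed

lemma word_act_faithful:
  assumes w: "set w \<subseteq> S" and f: "\<forall>x\<in>S. 0 < f x" and fixes_f: "word_act w f = f"
  shows "ceq w []"
proof (rule ccontr)
  assume "\<not> ceq w []"
  obtain w0 where w0: "ceq w w0" "length w0 = ell w" using ell_attained[OF w] by blast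
  then obtain w1 s where w1: "w0 = w1 @ [s]" using \<open>\<not> ceq w []\<close> by (metis rev_exhaust)
  have w1S: "set w1 \<subseteq> S" and s: "s \<in> S" using cox_eq_set[OF w0(1)] w1 by auto
  have "ell w1 < ell (w1 @ [s])"
    using ell_cong[OF w0(1)] ell_le_length[OF w1S] w0(2) w1 by simp
  then have "0 < word_act w1 f s" using tits_positivity[OF w1S s] f by simp
  moreover have "word_act w f s = - word_act w1 f s"
    using word_act_cox_eq[OF w0(1)] w1 word_act_snoc_self by simp
  ultimately show False using fixes_f f s by force
qed

end

lemma coxeter_matrix_diag: "coxeter_matrix S M \<Longrightarrow> s \<in> S \<Longrightarrow> M s s = 1"
  by (simp add: coxeter_matrix_def)

lemma coxeter_matrix_sym: "coxeter_matrix S M \<Longrightarrow> s \<in> S \<Longrightarrow> t \<in> S \<Longrightarrow> M s t = M t s"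
  by (simp add: coxeter_matrix_def)

lemma coxeter_matrix_ge_2:
  assumes "coxeter_matrix S M" "s \<in> S" "t \<in> S" "s \<noteq> t" "M s t = enat m"
  shows "2 \<le> m"
proof -
  have "1 \<le> M s t" "M s t \<noteq> 1" using assms(1-4) by (auto simp: coxeter_matrix_def)
  then show ?thesis using assms(5) by (simp add: one_enat_def)
qed

definition cos_form :: "('a \<Rightarrow> 'a \<Rightarrow> enat) \<Rightarrow> 'a \<Rightarrow> 'a \<Rightarrow> real" where
  "cos_form M s t =
     (if s = t then 1 else (case M s t of enat m \<Rightarrow> - cos (pi / real m) | \<infinity> \<Rightarrow> -1))"

lemma cos_form_enat: "s \<noteq> t \<Longrightarrow> M s t = enat m \<Longrightarrow> cos_form M s t = - cos (pi / real m)"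
  by (simp add: cos_form_def)

lemma cos_form_infinity: "s \<noteq> t \<Longrightarrow> M s t = \<infinity> \<Longrightarrow> cos_form M s t = -1"
  by (simp add: cos_form_def)

lemma cos_form_2: "s \<noteq> t \<Longrightarrow> M s t = 2 \<Longrightarrow> cos_form M s t = 0"
  by (simp add: cos_form_def numeral_eq_enat)

lemma cos_form_3: "s \<noteq> t \<Longrightarrow> M s t = 3 \<Longrightarrow> cos_form M s t = - 1 / 2"
  by (simp add: cos_form_def numeral_eq_enat cos_60)

lemma cos_form_le_neg_half:
  assumes "coxeter_matrix S M" "s \<in> S" "t \<in> S" "s \<noteq> t" "M s t \<noteq> 2"
  shows "cos_form M s t \<le> - 1 / 2"
proof (cases "M s t")
  case (enat m)
  have "2 \<le> m" using coxeter_matrix_ge_2[OF assms(1-4) enat] .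
  moreover have "m \<noteq> 2" using assms(5) enat by (auto simp: numeral_eq_enat)
  ultimately have m: "3 \<le> m" by simp
  have "pi / real m \<le> pi / 3" by (rule divide_left_mono) (use m in auto)
  then have "cos (pi / 3) \<le> cos (pi / real m)" by (intro cos_monotone_0_pi_le) (auto simp: m)
  then show ?thesis using cos_form_enat[of s t M, OF assms(4) enat] by (simp add: cos_60)
next
  case infinity
  then show ?thesis using cos_form_infinity[OF assms(4)] by simp
qed

lemma coxeter_form_cos_form:
  assumes "coxeter_matrix S M"
  shows "coxeter_form S M (cos_form M)"
proof
  fix s t m
  assume s: "s \<in> S" and t: "t \<in> S"
  show "M s s = 1" by (rule coxeter_matrix_diag[OF assms s])
  show "M s t = M t s" by (rule coxeter_matrix_sym[OF assms s t])
  then show "cos_form M s t = cos_form M t s" by (simp add: cos_form_def)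
  assume "s \<noteq> t"
  then show "M s t = enat m \<Longrightarrow> 2 \<le> m" using coxeter_matrix_ge_2[OF assms s t] by blast
  show "M s t = enat m \<Longrightarrow> cos_form M s t = - cos (pi / real m)"
    and "M s t = \<infinity> \<Longrightarrow> cos_form M s t \<le> -1"
    using cos_form_enat[of s t M] cos_form_infinity[of s t M] \<open>s \<noteq> t\<close> by simp_all
next
  show "cos_form M s s = 1" for s by (simp add: cos_form_def)
qed

subsection \<open>Edge contraction\<close>

text \<open>B'(s, s_0) = B(s, s_+) + B(s, s_-) is the value of B on \<alpha>_s and \<alpha>_{s_+} + \<alpha>_{s_-}, the root
  of the reflection s_+s_-s_+.\<close>

definition contracted_form :: "('a \<Rightarrow> 'a \<Rightarrow> enat) \<Rightarrow> 'a \<Rightarrow> 'a \<Rightarrow> 'a option \<Rightarrow> 'a option \<Rightarrow> real" where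
  "contracted_form M sp sm x y =
     (case (x, y) of
        (Some s, Some t) \<Rightarrow> cos_form M s t
      | (None, None) \<Rightarrow> 1
      | (Some s, None) \<Rightarrow> cos_form M s sp + cos_form M s sm
      | (None, Some t) \<Rightarrow> cos_form M sp t + cos_form M sm t)"

lemma enat_add_2_minus_2: "(2::enat) + x - 2 = x" "x + (2::enat) - 2 = x"
  by (cases x; simp add: numeral_eq_enat)+

locale edge_contraction =
  fixes S :: "'a set" and M :: "'a \<Rightarrow> 'a \<Rightarrow> enat" and sp sm :: 'a
  assumes coxeter: "coxeter_matrix S M" and sp: "sp \<in> S" and sm: "sm \<in> S" and sp_sm: "sp \<noteq> sm"
    and M_sp_sm: "M sp sm = 3"
begin

abbreviation "S' \<equiv> contract_set S sp sm"
abbreviation "N \<equiv> contract_matrix M sp sm"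
abbreviation "B \<equiv> cos_form M"
abbreviation "B' \<equiv> contracted_form M sp sm"

sublocale W: coxeter_form S M B
  by (rule coxeter_form_cos_form[OF coxeter])

lemma mem_S'_iff: "x \<in> S' \<longleftrightarrow> x = None \<or> (\<exists>s. x = Some s \<and> s \<in> S \<and> s \<noteq> sp \<and> s \<noteq> sm)"
  by (cases x) (auto simp: contract_set_def)

lemma N_simps:
  "N (Some s) (Some t) = M s t"
  "N None None = 1"
  "N (Some s) None = (if M s sp = 2 \<or> M s sm = 2 then M s sp + M s sm - 2 else \<infinity>)"
  "N None (Some s) = (if M s sp = 2 \<or> M s sm = 2 then M s sp + M s sm - 2 else \<infinity>)"
  by (simp_all add: contract_matrix_def)

lemma B'_simps:
  "B' (Some s) (Some t) = B s t"
  "B' None None = 1"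
  "B' (Some s) None = B s sp + B s sm"
  "B' None (Some s) = B sp s + B sm s"
  by (simp_all add: contracted_form_def)

lemma N_finite_cases:
  assumes "N (Some s) None = enat n"
  shows "(M s sp = 2 \<and> M s sm = enat n) \<or> (M s sm = 2 \<and> M s sp = enat n)"
  using assms by (auto simp: N_simps enat_add_2_minus_2 split: if_splits)

lemma N_infinite_cases:
  assumes "N (Some s) None = \<infinity>"
  shows "(M s sp = 2 \<and> M s sm = \<infinity>) \<or> (M s sm = 2 \<and> M s sp = \<infinity>) \<or> (M s sp \<noteq> 2 \<and> M s sm \<noteq> 2)"
  using assms by (cases "M s sp = 2") (auto simp: N_simps enat_add_2_minus_2)

lemma B'_Some_None_finite:
  assumes "s \<noteq> sp" "s \<noteq> sm" "N (Some s) None = enat n"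
  shows "B' (Some s) None = - cos (pi / real n)"
  using N_finite_cases[OF assms(3)] assms(1,2)
    cos_form_2[of s sp M] cos_form_2[of s sm M] cos_form_enat[of s sp M n] cos_form_enat[of s sm M n]
  by (auto simp: B'_simps)

lemma B'_Some_None_infinite:
  assumes "s \<in> S" "s \<noteq> sp" "s \<noteq> sm" "N (Some s) None = \<infinity>"
  shows "B' (Some s) None \<le> -1"
  using N_infinite_cases[OF assms(4)]
proof (elim disjE conjE)
  assume "M s sp \<noteq> 2" "M s sm \<noteq> 2"
  then have "B s sp \<le> -1/2" "B s sm \<le> -1/2"
    using cos_form_le_neg_half[OF coxeter assms(1)] assms(2,3) sp sm by simp_all
  then show ?thesis by (simp add: B'_simps)
qed (use assms(2,3) cos_form_2[of s sp M] cos_form_2[of s sm M]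
      cos_form_infinity[of s sp M] cos_form_infinity[of s sm M] in \<open>simp_all add: B'_simps\<close>)

sublocale W': coxeter_form S' N B'
proof
  fix x y m
  assume x: "x \<in> S'" and y: "y \<in> S'"
  show "N x x = 1" using x W.M_diag by (auto simp: mem_S'_iff N_simps)
  show "N x y = N y x" using x y W.M_sym by (auto simp: mem_S'_iff N_simps)
  show "B' x y = B' y x" using x y W.B_sym sp sm by (auto simp: mem_S'_iff B'_simps)
  assume "x \<noteq> y"
  then consider s t where "x = Some s" "y = Some t" "s \<in> S" "t \<in> S" "s \<noteq> t"
    | s where "x = Some s \<and> y = None \<or> x = None \<and> y = Some s" "s \<in> S" "s \<noteq> sp" "s \<noteq> sm"
    using x y by (auto simp: mem_S'_iff)
  note cases = this
  show "N x y = enat m \<Longrightarrow> 2 \<le> m"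
    using cases
  proof cases
    case (2 s)
    then have "N x y = N (Some s) None" by (auto simp: N_simps)
    then show "N x y = enat m \<Longrightarrow> 2 \<le> m"
      using N_finite_cases[of s m] W.M_ge_2 2 sp sm by metis
  qed (use W.M_ge_2 in \<open>auto simp: N_simps\<close>)
  show "N x y = enat m \<Longrightarrow> B' x y = - cos (pi / real m)"
    using cases
  proof cases
    case (2 s)
    then show "N x y = enat m \<Longrightarrow> B' x y = - cos (pi / real m)"
      using B'_Some_None_finite[of s m] W.B_sym sp sm
      by (auto simp: N_simps B'_simps)
  qed (use W.B_finite in \<open>auto simp: N_simps B'_simps\<close>)
  show "N x y = \<infinity> \<Longrightarrow> B' x y \<le> -1"
    using cases
  proof cases
    case (2 s)
    then show "N x y = \<infinity> \<Longrightarrow> B' x y \<le> -1"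
      using B'_Some_None_infinite[of s] W.B_sym sp sm
      by (auto simp: N_simps B'_simps)
  qed (use W.B_infinite in \<open>auto simp: N_simps B'_simps\<close>)
next
  show "B' x x = 1" for x by (cases x) (auto simp: B'_simps W.B_diag)
qed

subsection \<open>The homomorphism and its injectivity\<close>

definition lift_gen :: "'a option \<Rightarrow> 'a list" where
  "lift_gen x = (case x of Some s \<Rightarrow> [s] | None \<Rightarrow> [sp, sm, sp])"

definition lift_word :: "'a option list \<Rightarrow> 'a list" where
  "lift_word w = concat (map lift_gen w)"

lemma lift_word_Nil [simp]: "lift_word [] = []"
  and lift_word_Cons: "lift_word (x # w) = lift_gen x @ lift_word w"
  and lift_word_append [simp]: "lift_word (u @ v) = lift_word u @ lift_word v"
  by (simp_all add: lift_word_def)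

lemma set_lift_word: "set w \<subseteq> S' \<Longrightarrow> set (lift_word w) \<subseteq> S"
  by (induction w) (auto simp: lift_word_Cons lift_gen_def mem_S'_iff sp sm split: option.splits)

lemma lift_word_concat_replicate:
  "lift_word (concat (replicate n [x, y])) = concat (replicate n (lift_gen x @ lift_gen y))"
  by (induction n) (auto simp: lift_word_def)

lemma lift_relator_mixed:
  assumes s: "s \<in> S" "s \<noteq> sp" "s \<noteq> sm" and n: "N (Some s) None = enat n"
  shows "cox_eq S M (concat (replicate n ([s] @ [sp, sm, sp]))) []"
  using N_finite_cases[OF n]
proof
  assume "M s sp = 2 \<and> M s sm = enat n"
  then show ?thesis using W.conjugate_relator[OF s(1) sp sm] by simp
next
  assume M_s: "M s sm = 2 \<and> M s sp = enat n"
  have "cox_eq S M (alt_word sm sp 3) (alt_word sp sm 3)"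
    using W.braid_relation[OF sp sm] M_sp_sm by (simp add: numeral_eq_enat)
  then have "cox_eq S M [sp, sm, sp] [sm, sp, sm]"
    using cox_eq.sym by (simp add: numeral_3_eq_3)
  then have "cox_eq S M ([s] @ [sp, sm, sp]) ([s] @ [sm, sp, sm])"
    by (rule cox_eq_append_left) (use s in simp)
  then have "cox_eq S M (concat (replicate n ([s] @ [sp, sm, sp]))) (concat (replicate n [s, sm, sp, sm]))"
    using cox_eq_concat_replicate by simp
  also have "cox_eq S M \<dots> []" using W.conjugate_relator[OF s(1) sm sp] M_s by simp
  finally show ?thesis .
qed

lemma lift_relator:
  assumes x: "x \<in> S'" and y: "y \<in> S'" and n: "N x y = enat n"
  shows "cox_eq S M (concat (replicate n (lift_gen x @ lift_gen y))) []"
proof (cases x)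
  case None
  show ?thesis
  proof (cases y)
    case None
    then have "n = 1" using n \<open>x = None\<close> by (simp add: N_simps one_enat_def)
    moreover have "cox_eq S M ([sp, sm, sp] @ rev [sp, sm, sp]) []"
      using W.append_rev_cancel[of "[sp, sm, sp]"] sp sm by simp
    ultimately show ?thesis using \<open>x = None\<close> None by (simp add: lift_gen_def)
  next
    case (Some t)
    then have t: "t \<in> S" "t \<noteq> sp" "t \<noteq> sm" using y by (auto simp: mem_S'_iff)
    have "N (Some t) None = enat n" using n None Some by (simp add: N_simps)
    then have "cox_eq S M (rev (concat (replicate n ([t] @ [sp, sm, sp])))) []"
      using W.rev_cancel lift_relator_mixed t by blast
    then show ?thesis using None Some by (simp add: rev_concat_replicate lift_gen_def)
  qed
next
  case (Some s)
  then have s: "s \<in> S" "s \<noteq> sp" "s \<noteq> sm" using x by (auto simp: mem_S'_iff)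
  show ?thesis
  proof (cases y)
    case None
    then show ?thesis using lift_relator_mixed[OF s] n Some by (simp add: lift_gen_def)
  next
    case (Some t)
    then have "t \<in> S" using y by (auto simp: mem_S'_iff)
    then have "cox_eq S M ([] @ concat (replicate n [s, t]) @ []) ([] @ [])"
      by (intro cox_eq.rel) (use s n \<open>x = Some s\<close> Some in \<open>simp_all add: N_simps\<close>)
    then show ?thesis using \<open>x = Some s\<close> Some by (simp add: lift_gen_def)
  qed
qed

lemma cox_eq_lift_word: "cox_eq S' N w w' \<Longrightarrow> cox_eq S M (lift_word w) (lift_word w')"
proof (induction rule: cox_eq.induct)
  case (refl w)
  then show ?case using set_lift_word by (blast intro: cox_eq.refl)
next
  case (rel u v x y n)
  have "cox_eq S M (lift_word u @ concat (replicate n (lift_gen x @ lift_gen y)) @ lift_word v)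
      (lift_word u @ [] @ lift_word v)"
    by (rule cox_eq_cong[OF lift_relator]) (use rel set_lift_word in auto)
  then show ?case by (simp add: lift_word_concat_replicate)
qed (blast intro: cox_eq.sym cox_eq.trans)+

definition contraction_hom :: "'a option list set \<Rightarrow> 'a list set" where
  "contraction_hom X = cox_class S M (lift_word (SOME w. set w \<subseteq> S' \<and> X = cox_class S' N w))"

lemma contraction_hom_cox_class:
  assumes w: "set w \<subseteq> S'"
  shows "contraction_hom (cox_class S' N w) = cox_class S M (lift_word w)"
proof -
  define w' where "w' = (SOME w'. set w' \<subseteq> S' \<and> cox_class S' N w = cox_class S' N w')"
  have "set w' \<subseteq> S' \<and> cox_class S' N w = cox_class S' N w'"
    unfolding w'_def by (rule someI[of _ w]) (use w in auto)
  then have w': "set w' \<subseteq> S'" "cox_eq S' N w' w"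
    using cox_class_eq_iff[OF w] cox_eq.sym by auto
  then have "cox_class S M (lift_word w') = cox_class S M (lift_word w)"
    using cox_class_eq_iff[OF set_lift_word[OF w'(1)] set_lift_word[OF w]] cox_eq_lift_word by simp
  then show ?thesis unfolding contraction_hom_def w'_def by simp
qed

lemma contraction_hom_hom: "contraction_hom \<in> hom (coxeter_group S' N) (coxeter_group S M)"
proof (rule homI)
  fix x assume "x \<in> carrier (coxeter_group S' N)"
  then obtain w where "x = cox_class S' N w" "set w \<subseteq> S'" by (auto simp: carrier_coxeter_group)
  then show "contraction_hom x \<in> carrier (coxeter_group S M)"
    using contraction_hom_cox_class set_lift_word by (fastforce simp: carrier_coxeter_group)
next
  fix x y assume "x \<in> carrier (coxeter_group S' N)" "y \<in> carrier (coxeter_group S' N)"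
  then obtain a b where x: "x = cox_class S' N a" "set a \<subseteq> S'"
    and y: "y = cox_class S' N b" "set b \<subseteq> S'"
    by (auto simp: carrier_coxeter_group)
  have "contraction_hom (x \<otimes>\<^bsub>coxeter_group S' N\<^esub> y) = contraction_hom (cox_class S' N (a @ b))"
    using cox_class_mult[OF x(2) y(2)] x y by simp
  also have "\<dots> = cox_class S M (lift_word a @ lift_word b)"
    using contraction_hom_cox_class[of "a @ b"] x y by simp
  also have "\<dots> = cox_class S M (lift_word a) \<otimes>\<^bsub>coxeter_group S M\<^esub> cox_class S M (lift_word b)"
    using cox_class_mult[OF set_lift_word[OF x(2)] set_lift_word[OF y(2)]] by simp
  also have "\<dots> = contraction_hom x \<otimes>\<^bsub>coxeter_group S M\<^esub> contraction_hom y"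
    using contraction_hom_cox_class x y by simp
  finally show "contraction_hom (x \<otimes>\<^bsub>coxeter_group S' N\<^esub> y)
    = contraction_hom x \<otimes>\<^bsub>coxeter_group S M\<^esub> contraction_hom y" .
qed

lemma contraction_hom_Some:
  "s \<in> S - {sp, sm} \<Longrightarrow> contraction_hom (cox_class S' N [Some s]) = cox_class S M [s]"
  using contraction_hom_cox_class[of "[Some s]"] by (simp add: mem_S'_iff lift_word_def lift_gen_def)

lemma contraction_hom_None: "contraction_hom (cox_class S' N [None]) = cox_class S M [sp, sm, sp]"
  using contraction_hom_cox_class[of "[None]"] by (simp add: mem_S'_iff lift_word_def lift_gen_def)

definition contract_fun :: "('a \<Rightarrow> real) \<Rightarrow> 'a option \<Rightarrow> real" where
  "contract_fun f x = (case x of Some s \<Rightarrow> f s | None \<Rightarrow> f sp + f sm)"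

lemma contract_fun_word_act_lift_gen:
  "contract_fun (W.word_act (lift_gen x) f) = W'.reflect x (contract_fun f)"
proof
  fix y
  have "B sp sm = - 1 / 2" "B sm sp = - 1 / 2"
    using cos_form_3[of sp sm M, OF sp_sm M_sp_sm] W.B_sym sp sm by simp_all
  then show "contract_fun (W.word_act (lift_gen x) f) y = W'.reflect x (contract_fun f) y"
    by (cases x; cases y)
      (simp_all add: lift_gen_def W.word_act_def W.reflect_def W'.reflect_def contract_fun_def
        B'_simps W.B_diag algebra_simps)
qed

lemma contract_fun_word_act:
  "contract_fun (W.word_act (lift_word w) f) = W'.word_act w (contract_fun f)"
  by (induction w arbitrary: f)
    (simp_all add: lift_word_Cons W.word_act_append W'.word_act_Cons contract_fun_word_act_lift_gen)

lemma lift_word_cox_eq_imp: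
  assumes a: "set a \<subseteq> S'" and b: "set b \<subseteq> S'" and ab: "cox_eq S M (lift_word a) (lift_word b)"
  shows "cox_eq S' N a b"
proof -
  define F where "F = contract_fun (\<lambda>_. 1)"
  have F: "\<forall>x\<in>S'. 0 < F x" by (auto simp: F_def contract_fun_def split: option.splits)
  have "W'.word_act a F = W'.word_act b F"
    using W.word_act_cox_eq[OF ab] contract_fun_word_act unfolding F_def by metis
  then have "W'.word_act (a @ rev b) F = W'.word_act (b @ rev b) F"
    by (simp add: W'.word_act_append)
  also have "\<dots> = F" using W'.word_act_cox_eq[OF W'.append_rev_cancel[OF b]] by simp
  finally have "cox_eq S' N (a @ rev b) []" using W'.word_act_faithful F a b by simp
  then show ?thesis by (rule W'.eq_of_append_rev_cancel)
qed

lemma inj_on_contraction_hom: "inj_on contraction_hom (carrier (coxeter_group S' N))"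
proof (rule inj_onI)
  fix x y
  assume "x \<in> carrier (coxeter_group S' N)" "y \<in> carrier (coxeter_group S' N)"
    and eq: "contraction_hom x = contraction_hom y"
  then obtain a b where x: "x = cox_class S' N a" "set a \<subseteq> S'"
    and y: "y = cox_class S' N b" "set b \<subseteq> S'"
    by (auto simp: carrier_coxeter_group)
  have "cox_class S M (lift_word a) = cox_class S M (lift_word b)"
    using eq contraction_hom_cox_class x y by simp
  then have "cox_eq S M (lift_word a) (lift_word b)"
    using cox_class_eq_iff[OF set_lift_word[OF x(2)] set_lift_word[OF y(2)]] by simp
  then show "x = y" using lift_word_cox_eq_imp[OF x(2) y(2)] cox_class_eq_iff[OF x(2) y(2)] x y by simp
qed

end

theorem mainTheorem1:
  fixes S :: "'a set" and M :: "'a \<Rightarrow> 'a \<Rightarrow> enat" and sp sm :: 'a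
  assumes "coxeter_matrix S M" and "sp \<in> S" and "sm \<in> S" and "sp \<noteq> sm" and "M sp sm = 3"
  shows "\<exists>\<phi>. \<phi> \<in> hom (coxeter_group (contract_set S sp sm) (contract_matrix M sp sm))
                       (coxeter_group S M)
           \<and> (\<forall>s\<in>S - {sp, sm}.
                 \<phi> (cox_class (contract_set S sp sm) (contract_matrix M sp sm) [Some s])
                   = cox_class S M [s])
           \<and> \<phi> (cox_class (contract_set S sp sm) (contract_matrix M sp sm) [None])
                   = cox_class S M [sp, sm, sp]
           \<and> inj_on \<phi> (carrier (coxeter_group (contract_set S sp sm) (contract_matrix M sp sm)))"
proof -
  interpret edge_contraction S M sp sm
    using assms by unfold_locales
  show ?thesis
    using contraction_hom_hom contraction_hom_Some contraction_hom_None inj_on_contraction_hom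
    by blast
qed

end
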